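(* (i) If $\Gamma\vdash M:\mathbb{N}$ in ${\mathrm{PCF}}^\Omega$, then $[\![C_f\,M]\!]_\Gamma=[\![M]\!]_\Gamma[i\mapsto f(i)]$ (where $f(i)$ is read as $\bot$ when $i\notin\mathrm{dom}\,f$); similarly $[\![\mathit{suc}\,M]\!]_\Gamma=[\![M]\!]_\Gamma[i\mapsto i+1]$ and $[\![\mathit{pre}\,M]\!]_\Gamma=[\![M]\!]_\Gamma[0\mapsto 0, i+1\mapsto i]$. (ii) If $\Gamma\vdash M:\mathbb{N}$, $\Gamma\vdash N:\mathbb{N}$ and $\Gamma\vdash P:\mathbb{N}$ in ${\mathrm{PCF}}^\Omega$, then $[\![\mathit{ifzero}\,M\,N\,P]\!]_\Gamma=[\![M]\!]_\Gamma[0\mapsto d,\ i+1\mapsto e]$ where $[\![N]\!]_\Gamma=\lambda.d$ and $[\![P]\!]_\Gamma=\lambda.e$.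
   Context: ${\mathrm{PCF}}^\Omega$ is the simply typed $\lambda$-calculus over the base type $\mathbb{N}$ with constants $\underline{n}$, $\mathit{suc},\mathit{pre}:\mathbb{N}\rightarrow\mathbb{N}$, $\mathit{ifzero}:\mathbb{N}\rightarrow\mathbb{N}\rightarrow\mathbb{N}\rightarrow\mathbb{N}$, $Y_\sigma$ for every type $\sigma$, and $C_f:\mathbb{N}\rightarrow\mathbb{N}$ for each partial $f:\mathbb{N}\rightharpoonup\mathbb{N}$. NSPs: coinductively generated well-typed trees $p::=\lambda\vec x.e$, $e::=\bot\mid n\mid\mathtt{case}\ a\ \mathtt{of}\ (i\Rightarrow e_i\mid i\in\mathbb{N})$, $a::=x\,q_0\cdots q_{r-1}$, modulo $\alpha$. Meta-terms additionally allow $P\vec Q$ and $\mathtt{case}\ G\ \mathtt{of}(\ldots)$ for arbitrary ground $G$; evaluation $\langle\!\langle-\rangle\!\rangle$ is the limit of reduction by $\beta$, $\mathtt{case}\ \bot\ \mathtt{of}(\ldots)\rightsquigarrow\bot$, $\mathtt{case}\ n\ \mathtt{of}(i\Rightarrow E_i)\rightsquigarrow E_n$ and case-of-case commutation. Application: $(\lambda x_0\cdots x_r.e)\cdot q=\lambda x_1\cdots x_r.\langle\!\langle e[x_0\mapsto q]\rangle\!\rangle$; $x^\eta=\lambda\vec z.\mathtt{case}\ x\vec z^{\,\eta}\ \mathtt{of}\ (i\Rightarrow i)$. The interpretation $\Gamma\vdash[\![M]\!]_\Gamma$ of ${\mathrm{PCF}}^\Omega$ terms in NSPs: $[\![x]\!]=x^\eta$,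 $[\![\underline n]\!]=\lambda.n$, $[\![\mathit{suc}]\!]=\lambda x.\mathtt{case}\ x\ \mathtt{of}\ (i\Rightarrow i+1)$, $[\![\mathit{pre}]\!]=\lambda x.\mathtt{case}\ x\ \mathtt{of}\ (0\Rightarrow0\mid i+1\Rightarrow i)$, $[\![\mathit{ifzero}]\!]=\lambda xyz.\mathtt{case}\ x\ \mathtt{of}\ (0\Rightarrow\mathtt{case}\ y\ \mathtt{of}(j\Rightarrow j)\mid i+1\Rightarrow\mathtt{case}\ z\ \mathtt{of}(j\Rightarrow j))$, $[\![C_f]\!]=\lambda x.\mathtt{case}\ x\ \mathtt{of}\ (i\Rightarrow f(i))$, $[\![\lambda x.M]\!]_\Gamma=\lambda x.[\![M]\!]_{\Gamma,x}$, $[\![MN]\!]_\Gamma=[\![M]\!]_\Gamma\cdot[\![N]\!]_\Gamma$ (and $Y_\sigma$ by the standard fixed point procedure). Rightward numeral leaves of a term: $n$ is one in itself; those of $e$ are ones of $\lambda\vec x.e$; those of each $e_i$ are ones of $\mathtt{case}\ a\ \mathtt{of}\ (i\Rightarrow e_i)$. $t[i\mapsto e_i]$ replaces each rightward numeral leaf occurrence $i$ of $t$ by $e_i$ (for the ifzero clause, leaf $0$ by $d$ and leaf $i+1$ by $e$). *)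

theory Defs
  imports Main "HOL-Library.BNF_Corec"
begin

datatype ty = Nat | Arr ty ty

primrec argtys :: "ty \<Rightarrow> ty list" where
  "argtys Nat = []"
| "argtys (Arr a b) = a # argtys b"

text \<open>Variables are de Bruijn levels: PVar i refers to the i-th entry of the context
  (a list of types); the body of PLam s M lives in context Gamma @ [s].\<close>
datatype pcf =
    PVar nat
  | PNum nat
  | PSuc
  | PPre
  | PIfz
  | PY ty
  | PC "nat \<Rightarrow> nat option"
  | PLam ty pcf
  | PApp pcf pcf

inductive has_type :: "ty list \<Rightarrow> pcf \<Rightarrow> ty \<Rightarrow> bool" where
  t_var: "i < length \<Gamma> \<Longrightarrow> has_type \<Gamma> (PVar i) (\<Gamma> ! i)"
| t_num: "has_type \<Gamma> (PNum n) Nat"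
| t_suc: "has_type \<Gamma> PSuc (Arr Nat Nat)"
| t_pre: "has_type \<Gamma> PPre (Arr Nat Nat)"
| t_ifz: "has_type \<Gamma> PIfz (Arr Nat (Arr Nat (Arr Nat Nat)))"
| t_Y: "has_type \<Gamma> (PY s) (Arr (Arr s s) s)"
| t_C: "has_type \<Gamma> (PC f) (Arr Nat Nat)"
| t_lam: "has_type (\<Gamma> @ [s]) M t \<Longrightarrow> has_type \<Gamma> (PLam s M) (Arr s t)"
| t_app: "has_type \<Gamma> M (Arr s t) \<Longrightarrow> has_type \<Gamma> N s \<Longrightarrow> has_type \<Gamma> (PApp M N) t"

text \<open>Variables are de Bruijn levels (so alpha-equivalent
  trees are identical). An NSP  lambda x0..x(r-1). e  is the pair (r, e): if it sits at
  context depth k, it binds the levels k..k+r-1 and e sits at depth k+r.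
  Case x qs bs  is  case x q0 ... q(m-1) of (i => bs i).\<close>
codatatype exp =
    Bot
  | Num (num_val: nat)
  | Case (case_var: nat) (case_args: "(nat \<times> exp) list") (case_br: "nat \<Rightarrow> exp")

type_synonym nsp = "nat \<times> exp"

codatatype mt =
    MLam (mlam_arity: nat) (mlam_body: mt)
  | MBot
  | MNum nat
  | MCase mt "nat \<Rightarrow> mt"
  | MVar nat "mt list"
  | MApp mt "mt list"

corec embE :: "exp \<Rightarrow> mt" where
  "embE e = (case e of Bot \<Rightarrow> MBot | Num n \<Rightarrow> MNum n
     | Case x qs bs \<Rightarrow> MCase (MVar x (map (\<lambda>q. MLam (fst q) (embE (snd q))) qs)) (\<lambda>i. embE (bs i)))"

definition embP :: "nsp \<Rightarrow> mt" where
  "embP p = MLam (fst p) (embE (snd p))"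

corec shift :: "nat \<Rightarrow> nat \<Rightarrow> mt \<Rightarrow> mt" where
  "shift d m t = (case t of
      MLam r b \<Rightarrow> MLam r (shift d m b)
    | MBot \<Rightarrow> MBot
    | MNum n \<Rightarrow> MNum n
    | MCase g bs \<Rightarrow> MCase (shift d m g) (\<lambda>i. shift d m (bs i))
    | MVar x qs \<Rightarrow> MVar (if d \<le> x then x + m else x) (map (shift d m) qs)
    | MApp p qs \<Rightarrow> MApp (shift d m p) (map (shift d m) qs))"

text \<open>inst k n Qs d t: simultaneous substitution of Qs (living at depth k) for the levels
  k..k+n-1 in t, where t occurs at depth d >= k+n; levels >= k+n are decreased by n.\<close>
corec inst :: "nat \<Rightarrow> nat \<Rightarrow> mt list \<Rightarrow> nat \<Rightarrow> mt \<Rightarrow> mt" where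
  "inst k n Qs d t = (case t of
      MLam r b \<Rightarrow> MLam r (inst k n Qs (d + r) b)
    | MBot \<Rightarrow> MBot
    | MNum m \<Rightarrow> MNum m
    | MCase g bs \<Rightarrow> MCase (inst k n Qs d g) (\<lambda>i. inst k n Qs d (bs i))
    | MVar x qs \<Rightarrow>
        (if x < k then MVar x (map (inst k n Qs d) qs)
         else if x < k + n then MApp (shift k (d - k - n) (Qs ! (x - k))) (map (inst k n Qs d) qs)
         else MVar (x - n) (map (inst k n Qs d) qs))
    | MApp p qs \<Rightarrow> MApp (inst k n Qs d p) (map (inst k n Qs d) qs))"

inductive hstep :: "nat \<Rightarrow> mt \<Rightarrow> mt \<Rightarrow> bool" where
  h_beta: "length Qs = n \<Longrightarrow> hstep k (MApp (MLam n E) Qs) (inst k n Qs (k + n) E)"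
| h_bot: "hstep k (MCase MBot Es) MBot"
| h_num: "hstep k (MCase (MNum m) Es) (Es m)"
| h_cc: "hstep k (MCase (MCase G Fs) Es) (MCase G (\<lambda>i. MCase (Fs i) Es))"
| h_cong: "hstep k (MApp P Qs) G' \<Longrightarrow> hstep k (MCase (MApp P Qs) Es) (MCase G' Es)"

definition hnf :: "nat \<Rightarrow> mt \<Rightarrow> mt option" where
  "hnf k E = (if \<exists>F. (hstep k)\<^sup>*\<^sup>* E F \<and> (\<nexists>G. hstep k F G)
              then Some (THE F. (hstep k)\<^sup>*\<^sup>* E F \<and> (\<nexists>G. hstep k F G)) else None)"

definition hclass :: "nat \<Rightarrow> mt \<Rightarrow> (nat + (nat \<times> mt list \<times> (nat \<Rightarrow> mt))) option" where
  "hclass k E = (case hnf k E of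
      Some (MNum m) \<Rightarrow> Some (Inl m)
    | Some (MCase (MVar x Qs) Es) \<Rightarrow> Some (Inr (x, Qs, Es))
    | _ \<Rightarrow> None)"

corec evalE :: "nat \<Rightarrow> mt \<Rightarrow> exp" where
  "evalE k E = (case hclass k E of
      Some (Inl m) \<Rightarrow> Num m
    | Some (Inr (x, Qs, Es)) \<Rightarrow>
        Case x (map (\<lambda>Q. (mlam_arity Q, evalE (k + mlam_arity Q) (mlam_body Q))) Qs)
               (\<lambda>i. evalE k (Es i))
    | None \<Rightarrow> Bot)"

text \<open>Application of NSPs at context depth k:
  (lambda x0..xr. e) . q = lambda x1..xr. <<e[x0 := q]>>.\<close>
definition app :: "nat \<Rightarrow> nsp \<Rightarrow> nsp \<Rightarrow> nsp" where
  "app k p q = (case p of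
      (Suc r, e) \<Rightarrow> (r, evalE (k + r) (inst k 1 [embP q] (k + 1 + r) (embE e)))
    | (0, e) \<Rightarrow> (0, Bot))"

corec limE :: "(nat \<Rightarrow> exp) \<Rightarrow> exp" where
  "limE s = (if \<exists>m N. \<forall>n\<ge>N. s n = Num m then Num (SOME m. \<exists>N. \<forall>n\<ge>N. s n = Num m)
     else if \<exists>x r N. \<forall>n\<ge>N. is_Case (s n) \<and> case_var (s n) = x \<and> length (case_args (s n)) = r
     then (let (x, r, N) = (SOME (x, r, N). \<forall>n\<ge>N. is_Case (s n) \<and> case_var (s n) = x
                                    \<and> length (case_args (s n)) = r)
           in Case x
                (map (\<lambda>j. (fst (case_args (s N) ! j),
                            limE (\<lambda>n. snd (case_args (s (N + n)) ! j)))) [0..<r])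
                (\<lambda>i. limE (\<lambda>n. case_br (s (N + n)) i)))
     else Bot)"

text \<open>eta-expansion  x^eta = lambda z. case x z^eta of (i => i), at depth k.\<close>
definition mkEta :: "(nat \<Rightarrow> nat \<Rightarrow> nsp) list \<Rightarrow> nat \<Rightarrow> nat \<Rightarrow> nsp" where
  "mkEta fs k x = (length fs,
     Case x (map (\<lambda>j. (fs ! j) (k + length fs) (k + j)) [0..<length fs]) Num)"

primrec etaArgs :: "ty \<Rightarrow> (nat \<Rightarrow> nat \<Rightarrow> nsp) list" where
  "etaArgs Nat = []"
| "etaArgs (Arr a b) = mkEta (etaArgs a) # etaArgs b"

definition eta :: "ty \<Rightarrow> nat \<Rightarrow> nat \<Rightarrow> nsp" where
  "eta s = mkEta (etaArgs s)"

text \<open>Y_s at depth k: lambda g. sup_n g^n(bottom), computed inside lambda g (depth k+1).\<close>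
definition Yapprox :: "ty \<Rightarrow> nat \<Rightarrow> nat \<Rightarrow> nsp" where
  "Yapprox s k n = ((\<lambda>a. app (Suc k) (eta (Arr s s) (Suc k) k) a) ^^ n) (length (argtys s), Bot)"

definition Ysem :: "ty \<Rightarrow> nat \<Rightarrow> nsp" where
  "Ysem s k = (Suc (length (argtys s)), limE (\<lambda>n. snd (Yapprox s k n)))"

primrec interp :: "ty list \<Rightarrow> pcf \<Rightarrow> nsp" where
  "interp \<Gamma> (PVar i) = eta (\<Gamma> ! i) (length \<Gamma>) i"
| "interp \<Gamma> (PNum n) = (0, Num n)"
| "interp \<Gamma> PSuc = (1, Case (length \<Gamma>) [] (\<lambda>i. Num (i + 1)))"
| "interp \<Gamma> PPre = (1, Case (length \<Gamma>) [] (\<lambda>i. if i = 0 then Num 0 else Num (i - 1)))"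
| "interp \<Gamma> PIfz = (3, Case (length \<Gamma>) []
      (\<lambda>i. if i = 0 then Case (length \<Gamma> + 1) [] Num else Case (length \<Gamma> + 2) [] Num))"
| "interp \<Gamma> (PC f) = (1, Case (length \<Gamma>) [] (\<lambda>i. case f i of None \<Rightarrow> Bot | Some j \<Rightarrow> Num j))"
| "interp \<Gamma> (PY s) = Ysem s (length \<Gamma>)"
| "interp \<Gamma> (PLam s M) = (let p = interp (\<Gamma> @ [s]) M in (Suc (fst p), snd p))"
| "interp \<Gamma> (PApp M N) = app (length \<Gamma>) (interp \<Gamma> M) (interp \<Gamma> N)"

corec leafE :: "(nat \<Rightarrow> exp) \<Rightarrow> exp \<Rightarrow> exp" where
  "leafE g e = (case e of Bot \<Rightarrow> Bot | Num i \<Rightarrow> g i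
     | Case x qs bs \<Rightarrow> Case x qs (\<lambda>i. leafE g (bs i)))"

definition leafP :: "(nat \<Rightarrow> exp) \<Rightarrow> nsp \<Rightarrow> nsp" where
  "leafP g p = (fst p, leafE g (snd p))"

end

theory Submission
  imports Defs
begin

text \<open>The interpretation of a ground term is a tree whose rightward leaves are numerals. Each of
  the constants suc, pre, ifzero and C_f denotes an NSP of the shape
  \<open>\<lambda>x\<dots>. case x of (i \<Rightarrow> b\<^sub>i)\<close>; applying it to \<open>[[M]]\<close> substitutes that tree for \<open>x\<close>, and
  evaluation then pushes the branches \<open>b\<^sub>i\<close> down to the leaves by case-of-case commutation,
  leaving the rest of the tree untouched. With de Bruijn levels the variables bound inside
  \<open>[[M]]\<close> are shifted by the substitution; this is tracked by a renaming of the tree, which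
  the later applications of ifzero undo again.\<close>

lemma embE_simps [simp]:
  "embE Bot = MBot" "embE (Num n) = MNum n"
  "embE (Case x qs bs) =
     MCase (MVar x (map (\<lambda>q. MLam (fst q) (embE (snd q))) qs)) (\<lambda>i. embE (bs i))"
  by (subst embE.code; simp)+

lemma leafE_simps [simp]:
  "leafE g Bot = Bot" "leafE g (Num n) = g n"
  "leafE g (Case x qs bs) = Case x qs (\<lambda>i. leafE g (bs i))"
  by (subst leafE.code; simp)+

lemma shift_simps [simp]:
  "shift d m (MLam r b) = MLam r (shift d m b)"
  "shift d m MBot = MBot"
  "shift d m (MNum n) = MNum n"
  "shift d m (MCase g bs) = MCase (shift d m g) (\<lambda>i. shift d m (bs i))"
  "shift d m (MVar x qs) = MVar (if d \<le> x then x + m else x) (map (shift d m) qs)"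
  "shift d m (MApp p qs) = MApp (shift d m p) (map (shift d m) qs)"
  by (subst shift.code; simp)+

lemma inst_simps [simp]:
  "inst k n Qs d (MLam r b) = MLam r (inst k n Qs (d + r) b)"
  "inst k n Qs d MBot = MBot"
  "inst k n Qs d (MNum m) = MNum m"
  "inst k n Qs d (MCase g bs) = MCase (inst k n Qs d g) (\<lambda>i. inst k n Qs d (bs i))"
  "inst k n Qs d (MVar x qs) =
     (if x < k then MVar x (map (inst k n Qs d) qs)
      else if x < k + n then MApp (shift k (d - k - n) (Qs ! (x - k))) (map (inst k n Qs d) qs)
      else MVar (x - n) (map (inst k n Qs d) qs))"
  "inst k n Qs d (MApp p qs) = MApp (inst k n Qs d p) (map (inst k n Qs d) qs)"
  by (subst inst.code; simp)+

subsection \<open>Evaluation is invariant under head reduction\<close>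

lemma hstep_deterministic: "hstep k E F \<Longrightarrow> hstep k E G \<Longrightarrow> F = G"
proof (induction arbitrary: G rule: hstep.induct)
  case (h_cong P Qs G' Es)
  from h_cong.prems show ?case
    by (cases rule: hstep.cases) (auto elim: hstep.cases intro: h_cong.IH)
qed (auto elim: hstep.cases)

lemma rtranclp_hstep_from_normal_form:
  "(hstep k)\<^sup>*\<^sup>* F F' \<Longrightarrow> \<nexists>G. hstep k F G \<Longrightarrow> F' = F"
  by (induction rule: converse_rtranclp_induct) auto

lemma hnf_normal_form: "\<nexists>G. hstep k F G \<Longrightarrow> hnf k F = Some F"
  unfolding hnf_def using rtranclp_hstep_from_normal_form by (auto intro!: the_equality)

lemma hnf_hstep:
  assumes "hstep k E E'"
  shows "hnf k E = hnf k E'"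
proof -
  have "(hstep k)\<^sup>*\<^sup>* E F \<longleftrightarrow> (hstep k)\<^sup>*\<^sup>* E' F" if "\<nexists>G. hstep k F G" for F
  proof
    assume "(hstep k)\<^sup>*\<^sup>* E F"
    then show "(hstep k)\<^sup>*\<^sup>* E' F"
      by (cases rule: converse_rtranclpE) (use assms that hstep_deterministic in blast)+
  qed (use assms converse_rtranclp_into_rtranclp in metis)
  then have "(\<lambda>F. (hstep k)\<^sup>*\<^sup>* E F \<and> (\<nexists>G. hstep k F G))
      = (\<lambda>F. (hstep k)\<^sup>*\<^sup>* E' F \<and> (\<nexists>G. hstep k F G))"
    by (auto simp: fun_eq_iff)
  then show ?thesis
    unfolding hnf_def by simp
qed

lemma evalE_hstep: "hstep k E E' \<Longrightarrow> evalE k E = evalE k E'"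
  by (subst (1 2) evalE.code) (simp add: hclass_def hnf_hstep)

lemma evalE_normal_form:
  assumes "\<nexists>G. hstep k F G"
  shows "evalE k F = (case F of
      MNum m \<Rightarrow> Num m
    | MCase (MVar x Qs) Es \<Rightarrow>
        Case x (map (\<lambda>Q. (mlam_arity Q, evalE (k + mlam_arity Q) (mlam_body Q))) Qs)
          (\<lambda>i. evalE k (Es i))
    | _ \<Rightarrow> Bot)"
  by (subst evalE.code) (simp add: assms hclass_def hnf_normal_form split: mt.split)

lemma evalE_MBot [simp]: "evalE k MBot = Bot"
  by (subst evalE_normal_form) (auto elim: hstep.cases)

lemma evalE_MNum [simp]: "evalE k (MNum n) = Num n"
  by (subst evalE_normal_form) (auto elim: hstep.cases)

lemma evalE_MCase_MVar [simp]:
  "evalE k (MCase (MVar x Qs) Es) =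
     Case x (map (\<lambda>Q. (mlam_arity Q, evalE (k + mlam_arity Q) (mlam_body Q))) Qs)
       (\<lambda>i. evalE k (Es i))"
  by (subst evalE_normal_form) (auto elim: hstep.cases)

lemma evalE_MCase_MBot [simp]: "evalE k (MCase MBot Es) = Bot"
  using evalE_hstep[OF h_bot] by simp

lemma evalE_MCase_MNum [simp]: "evalE k (MCase (MNum m) Es) = evalE k (Es m)"
  using evalE_hstep[OF h_num] by simp

lemma evalE_MCase_MCase:
  "evalE k (MCase (MCase G Fs) Es) = evalE k (MCase G (\<lambda>i. MCase (Fs i) Es))"
  using evalE_hstep[OF h_cc] by simp

subsection \<open>Embedding expressions into meta-terms\<close>

text \<open>With de Bruijn levels, \<open>renE\<close> renames the variables bound inside \<open>e\<close> as well as the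
  free ones.\<close>

corec renE :: "(nat \<Rightarrow> nat) \<Rightarrow> exp \<Rightarrow> exp" where
  "renE \<rho> e = (case e of Bot \<Rightarrow> Bot | Num n \<Rightarrow> Num n
     | Case x qs bs \<Rightarrow> Case (\<rho> x) (map (\<lambda>q. (fst q, renE \<rho> (snd q))) qs) (\<lambda>i. renE \<rho> (bs i)))"

lemma renE_simps [simp]:
  "renE \<rho> Bot = Bot" "renE \<rho> (Num n) = Num n"
  "renE \<rho> (Case x qs bs) =
     Case (\<rho> x) (map (\<lambda>q. (fst q, renE \<rho> (snd q))) qs) (\<lambda>i. renE \<rho> (bs i))"
  by (subst renE.code; simp)+

lemma renE_ident:
  assumes "\<And>x. \<rho> x = x"
  shows "renE \<rho> e = e"
proof -
  have "a = b" if "\<exists>e. a = renE \<rho> e \<and> b = e" for a b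
    using that
  proof (coinduction arbitrary: a b rule: exp.coinduct)
    case (Eq_exp a b)
    then obtain e where "a = renE \<rho> e" "b = e" by blast
    then show ?case
      by (cases e) (auto simp: assms list_all2_conv_all_nth rel_fun_def rel_prod_sel)
  qed
  then show ?thesis by blast
qed

lemma leafE_Num: "leafE Num e = e"
proof -
  have "a = b" if "\<exists>e. a = leafE Num e \<and> b = e" for a b
    using that
  proof (coinduction arbitrary: a b rule: exp.coinduct_strong)
    case (Eq_exp a b)
    then obtain e where "a = leafE Num e" "b = e" by blast
    then show ?case
      by (cases e) (auto simp: list_all2_conv_all_nth rel_fun_def rel_prod_sel)
  qed
  then show ?thesis by blast
qed

corec embL :: "(nat \<Rightarrow> mt) \<Rightarrow> exp \<Rightarrow> mt" where
  "embL G e = (case e of Bot \<Rightarrow> MBot | Num n \<Rightarrow> G n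
     | Case x qs bs \<Rightarrow>
         MCase (MVar x (map (\<lambda>q. MLam (fst q) (embE (snd q))) qs)) (\<lambda>i. embL G (bs i)))"

lemma embL_simps [simp]:
  "embL G Bot = MBot" "embL G (Num n) = G n"
  "embL G (Case x qs bs) =
     MCase (MVar x (map (\<lambda>q. MLam (fst q) (embE (snd q))) qs)) (\<lambda>i. embL G (bs i))"
  by (subst embL.code; simp)+

lemma embE_leafE: "embE (leafE h e) = embL (\<lambda>i. embE (h i)) e"
proof -
  have "a = b" if "\<exists>e. a = embE (leafE h e) \<and> b = embL (\<lambda>i. embE (h i)) e" for a b
    using that
  proof (coinduction arbitrary: a b rule: mt.coinduct_strong)
    case (Eq_mt a b)
    then obtain e where "a = embE (leafE h e)" "b = embL (\<lambda>i. embE (h i)) e" by blast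
    then show ?case
      by (cases e) (auto simp: list_all2_conv_all_nth rel_fun_def)
  qed
  then show ?thesis by blast
qed

lemma evalE_embE [simp]: "evalE k (embE e) = e"
proof -
  have "a = b" if "\<exists>k. a = evalE k (embE b)" for a b
    using that
  proof (coinduction arbitrary: a b rule: exp.coinduct)
    case (Eq_exp a b)
    then obtain k where "a = evalE k (embE b)" by blast
    then show ?case
      by (cases b) (auto simp: list_all2_conv_all_nth rel_fun_def rel_prod_sel)
  qed
  then show ?thesis by blast
qed

lemma evalE_embL: "evalE k (embL G e) = leafE (\<lambda>i. evalE k (G i)) e"
proof -
  have "a = b" if "\<exists>e. a = evalE k (embL G e) \<and> b = leafE (\<lambda>i. evalE k (G i)) e" for a b
    using that
  proof (coinduction arbitrary: a b rule: exp.coinduct_strong)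
    case (Eq_exp a b)
    then obtain e where "a = evalE k (embL G e)" "b = leafE (\<lambda>i. evalE k (G i)) e" by blast
    then show ?case
      by (cases e) (auto simp: list_all2_conv_all_nth rel_fun_def rel_prod_sel)
  qed
  then show ?thesis by blast
qed

lemma evalE_MCase_embE: "evalE k (MCase (embE e) F) = leafE (\<lambda>i. evalE k (F i)) e"
proof -
  have "a = b"
    if "\<exists>e. a = evalE k (MCase (embE e) F) \<and> b = leafE (\<lambda>i. evalE k (F i)) e" for a b
    using that
  proof (coinduction arbitrary: a b rule: exp.coinduct_strong)
    case (Eq_exp a b)
    then obtain e where "a = evalE k (MCase (embE e) F)" "b = leafE (\<lambda>i. evalE k (F i)) e"
      by blast
    then show ?case
      by (cases e)
        (auto simp: evalE_MCase_MCase list_all2_conv_all_nth rel_fun_def rel_prod_sel)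
  qed
  then show ?thesis by blast
qed

lemma shift_embE: "shift d m (embE e) = embE (renE (\<lambda>x. if d \<le> x then x + m else x) e)"
proof -
  let ?s = "\<lambda>x. if d \<le> x then x + m else x"
  define F where "F e = shift d m (embE e)" for e
  define G where "G e = embE (renE ?s e)" for e
  have "a = b"
    if "(\<exists>e. a = F e \<and> b = G e)
      \<or> (\<exists>x qs. a = MVar x (map (\<lambda>q. MLam (fst q) (F (snd q))) qs)
               \<and> b = MVar x (map (\<lambda>q. MLam (fst q) (G (snd q))) qs))
      \<or> (\<exists>r e. a = MLam r (F e) \<and> b = MLam r (G e))" for a b
    using that
  proof (coinduction arbitrary: a b rule: mt.coinduct)
    case (Eq_mt a b)
    then show ?case
    proof (elim disjE exE conjE)
      fix e assume a: "a = F e" and b: "b = G e"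
      show ?thesis
      proof (cases e)
        case (Case x qs bs)
        have "a = MCase (MVar (?s x) (map (\<lambda>q. MLam (fst q) (F (snd q))) qs)) (\<lambda>i. F (bs i))"
          using a Case by (simp add: F_def o_def)
        moreover have
          "b = MCase (MVar (?s x) (map (\<lambda>q. MLam (fst q) (G (snd q))) qs)) (\<lambda>i. G (bs i))"
          using b Case by (simp add: G_def o_def)
        ultimately show ?thesis by (auto simp: rel_fun_def)
      qed (use a b in \<open>auto simp: F_def G_def\<close>)
    qed (auto simp: list_all2_conv_all_nth)
  qed
  then show ?thesis unfolding F_def G_def by blast
qed

lemma inst_embE_renE:
  assumes avoid: "\<And>x. \<rho> x < k \<or> k + n \<le> \<rho> x"
  shows "inst k n Qs d (embE (renE \<rho> e))
           = embE (renE (\<lambda>x. if \<rho> x < k then \<rho> x else \<rho> x - n) e)"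
proof -
  let ?s = "\<lambda>x. if \<rho> x < k then \<rho> x else \<rho> x - n"
  define F where "F d e = inst k n Qs d (embE (renE \<rho> e))" for d e
  define H where "H e = embE (renE ?s e)" for e
  have inst_var: "inst k n Qs d (MVar (\<rho> x) A) = MVar (?s x) (map (inst k n Qs d) A)" for d x A
    using avoid[of x] by auto
  have "a = b"
    if "(\<exists>d e. a = F d e \<and> b = H e)
      \<or> (\<exists>d x qs. a = MVar x (map (\<lambda>q. MLam (fst q) (F (d + fst q) (snd q))) qs)
                 \<and> b = MVar x (map (\<lambda>q. MLam (fst q) (H (snd q))) qs))
      \<or> (\<exists>r d e. a = MLam r (F d e) \<and> b = MLam r (H e))" for a b
    using that
  proof (coinduction arbitrary: a b rule: mt.coinduct)
    case (Eq_mt a b)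
    then show ?case
    proof (elim disjE exE conjE)
      fix d e assume a: "a = F d e" and b: "b = H e"
      show ?thesis
      proof (cases e)
        case (Case x qs bs)
        have "a = MCase (MVar (?s x) (map (\<lambda>q. MLam (fst q) (F (d + fst q) (snd q))) qs))
                    (\<lambda>i. F d (bs i))"
          using a Case by (simp add: F_def o_def inst_var del: inst_simps(5))
        moreover have
          "b = MCase (MVar (?s x) (map (\<lambda>q. MLam (fst q) (H (snd q))) qs)) (\<lambda>i. H (bs i))"
          using b Case by (simp add: H_def o_def)
        ultimately show ?thesis by (auto simp: rel_fun_def)
      qed (use a b in \<open>auto simp: F_def H_def\<close>)
    qed (auto simp: list_all2_conv_all_nth)
  qed
  then show ?thesis unfolding F_def H_def by blast
qed

lemma inst_embL_renE:
  assumes avoid: "\<And>x. \<rho> x < k \<or> k + n \<le> \<rho> x"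
  shows "inst k n Qs d (embL G (renE \<rho> e))
           = embL (\<lambda>i. inst k n Qs d (G i)) (renE (\<lambda>x. if \<rho> x < k then \<rho> x else \<rho> x - n) e)"
proof -
  let ?s = "\<lambda>x. if \<rho> x < k then \<rho> x else \<rho> x - n"
  have inst_var: "inst k n Qs d (MVar (\<rho> x) A) = MVar (?s x) (map (inst k n Qs d) A)" for x A
    using avoid[of x] by auto
  have "a = b"
    if "\<exists>e. a = inst k n Qs d (embL G (renE \<rho> e))
             \<and> b = embL (\<lambda>i. inst k n Qs d (G i)) (renE ?s e)" for a b
    using that
  proof (coinduction arbitrary: a b rule: mt.coinduct_strong)
    case (Eq_mt a b)
    then obtain e where a: "a = inst k n Qs d (embL G (renE \<rho> e))"
      and b: "b = embL (\<lambda>i. inst k n Qs d (G i)) (renE ?s e)" by blast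
    show ?case
    proof (cases e)
      case (Case x qs bs)
      then show ?thesis
        using a b by (simp add: o_def inst_var inst_embE_renE[OF avoid] rel_fun_def
            list.rel_refl del: inst_simps(5)) blast
    next
      case (Num i)
      then show ?thesis
        using a b by (auto intro: list.rel_refl_strong simp: rel_fun_def)
    qed (use a b in auto)
  qed
  then show ?thesis by blast
qed

subsection \<open>Applying an NSP that cases on its first argument\<close>

lemma evalE_MCase_nullary_beta:
  "evalE k (MCase (MApp (MLam 0 (embE e)) []) F) = leafE (\<lambda>i. evalE k (F i)) e"
proof -
  have "inst k 0 [] k (embE e) = embE e"
    using inst_embE_renE[of "\<lambda>x. x" k 0 "[]" k e] by (simp add: renE_ident) linarith
  moreover have "hstep k (MCase (MApp (MLam 0 (embE e)) []) F)
                   (MCase (inst k 0 [] (k + 0) (embE e)) F)"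
    by (intro h_cong h_beta) simp
  ultimately show ?thesis by (simp add: evalE_hstep evalE_MCase_embE)
qed

lemma app_Case_head:
  "app k (Suc r, Case k [] br) (0, e)
     = (r, leafE (\<lambda>i. evalE (k + r) (inst k 1 [MLam 0 (embE e)] (Suc k + r) (embE (br i))))
             (renE (\<lambda>x. if k \<le> x then x + r else x) e))"
  by (simp add: app_def embP_def shift_embE evalE_MCase_nullary_beta)

lemma app_leafE_renE:
  assumes avoid: "\<And>x. \<rho> x < k \<or> k < \<rho> x"
  shows "app k (Suc r, leafE h (renE \<rho> e)) (0, q)
     = (r, leafE (\<lambda>i. evalE (k + r) (inst k 1 [MLam 0 (embE q)] (Suc k + r) (embE (h i))))
             (renE (\<lambda>x. if \<rho> x < k then \<rho> x else \<rho> x - 1) e))"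
proof -
  have "\<rho> x < k \<or> k + 1 \<le> \<rho> x" for x
    using avoid[of x] by linarith
  then show ?thesis
    by (simp add: app_def embP_def embE_leafE inst_embL_renE evalE_embL) (simp only: One_nat_def)
qed

lemma app_constant_case:
  assumes "\<And>i. br i = Bot \<or> (\<exists>j. br i = Num j)"
  shows "app k (Suc 0, Case k [] br) (0, e) = (0, leafE br e)"
proof -
  have "evalE k (inst k 1 Qs d (embE (br i))) = br i" for Qs d i
    using assms[of i] by auto
  then show ?thesis
    using app_Case_head[of k 0 br e] by (simp add: renE_ident)
qed

lemma app_ifz:
  "app k (app k (app k
     (3, Case k [] (\<lambda>i. if i = 0 then Case (k + 1) [] Num else Case (k + 2) [] Num))
     (0, m)) (0, d)) (0, e)
   = (0, leafE (\<lambda>i. if i = 0 then d else e) m)"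
proof -
  let ?s2 = "\<lambda>x. if k \<le> x then x + 2 else x"
  let ?s1 = "\<lambda>x. if k \<le> x then x + 1 else x"
  let ?h0 = "\<lambda>i. if i = 0 then Case (k + 1) [] Num else Case (k + 2) [] Num"
  let ?h1 = "\<lambda>i. if i = 0 then Case k [] Num else Case (k + 1) [] Num"
  let ?h2 = "\<lambda>i. if i = 0 then renE ?s1 d else Case k [] Num"
  have "app k (3, Case k [] ?h0) (0, m) = (2, leafE ?h1 (renE ?s2 m))"
  proof -
    have leaves:
      "(\<lambda>i. evalE (k + 2) (inst k 1 [MLam 0 (embE m)] (Suc k + 2) (embE (?h0 i)))) = ?h1"
      by (auto simp: fun_eq_iff)
    show ?thesis
      using app_Case_head[of k 2 ?h0 m, unfolded leaves] by (simp add: numeral_3_eq_3)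
  qed
  moreover have "app k (2, leafE ?h1 (renE ?s2 m)) (0, d) = (1, leafE ?h2 (renE ?s1 m))"
  proof -
    have leaves:
      "(\<lambda>i. evalE (k + 1) (inst k 1 [MLam 0 (embE d)] (Suc k + 1) (embE (?h1 i)))) = ?h2"
      by (auto simp: fun_eq_iff shift_embE evalE_MCase_nullary_beta leafE_Num)
        (simp only: One_nat_def)
    have unshift: "(\<lambda>x. if ?s2 x < k then ?s2 x else ?s2 x - 1) = ?s1"
      by auto
    show ?thesis
      using app_leafE_renE[of ?s2 k 1 ?h1 m d, unfolded leaves unshift]
      by (simp add: numeral_2_eq_2)
  qed
  moreover have
    "app k (1, leafE ?h2 (renE ?s1 m)) (0, e) = (0, leafE (\<lambda>i. if i = 0 then d else e) m)"
  proof -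
    have unshift: "renE (\<lambda>x. if ?s1 x < k then ?s1 x else ?s1 x - 1) t = t" for t
      by (rule renE_ident) auto
    have leaves: "(\<lambda>i. evalE (k + 0) (inst k 1 [MLam 0 (embE e)] (Suc k + 0) (embE (?h2 i))))
        = (\<lambda>i. if i = 0 then d else e)"
      by (auto simp: fun_eq_iff inst_embE_renE unshift shift_embE evalE_MCase_nullary_beta
          leafE_Num renE_ident)
    show ?thesis
      using app_leafE_renE[of ?s1 k 0 ?h2 m e, unfolded leaves unshift] by simp
  qed
  ultimately show ?thesis by simp
qed

subsection \<open>The interpretation of first-order constants\<close>

lemma length_etaArgs: "length (etaArgs s) = length (argtys s)"
  by (induction s) auto

lemma fst_interp: "has_type \<Gamma> M t \<Longrightarrow> fst (interp \<Gamma> M) = length (argtys t)"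
proof (induction rule: has_type.induct)
  case (t_app \<Gamma> M s t N)
  then show ?case by (auto simp: app_def split: prod.split nat.split)
qed (auto simp: eta_def mkEta_def length_etaArgs Ysem_def Let_def)

lemma interp_ground:
  assumes "has_type \<Gamma> M Nat"
  obtains m where "interp \<Gamma> M = (0, m)"
  using fst_interp[OF assms] by (cases "interp \<Gamma> M") auto

theorem proposition3p5:
  shows "(\<forall>\<Gamma> M f. has_type \<Gamma> M Nat \<longrightarrow>
            interp \<Gamma> (PApp (PC f) M)
              = leafP (\<lambda>i. case f i of None \<Rightarrow> Bot | Some j \<Rightarrow> Num j) (interp \<Gamma> M))
       \<and> (\<forall>\<Gamma> M. has_type \<Gamma> M Nat \<longrightarrow>
            interp \<Gamma> (PApp PSuc M) = leafP (\<lambda>i. Num (i + 1)) (interp \<Gamma> M))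
       \<and> (\<forall>\<Gamma> M. has_type \<Gamma> M Nat \<longrightarrow>
            interp \<Gamma> (PApp PPre M)
              = leafP (\<lambda>i. if i = 0 then Num 0 else Num (i - 1)) (interp \<Gamma> M))
       \<and> (\<forall>\<Gamma> M N P d e. has_type \<Gamma> M Nat \<longrightarrow> has_type \<Gamma> N Nat \<longrightarrow> has_type \<Gamma> P Nat \<longrightarrow>
            interp \<Gamma> N = (0, d) \<longrightarrow> interp \<Gamma> P = (0, e) \<longrightarrow>
            interp \<Gamma> (PApp (PApp (PApp PIfz M) N) P)
              = leafP (\<lambda>i. if i = 0 then d else e) (interp \<Gamma> M))"
proof (intro conjI allI impI)
  fix \<Gamma> M and f :: "nat \<Rightarrow> nat option"
  assume "has_type \<Gamma> M Nat"
  then obtain m where "interp \<Gamma> M = (0, m)" by (rule interp_ground)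
  moreover have br: "(case f i of None \<Rightarrow> Bot | Some j \<Rightarrow> Num j) = Bot
      \<or> (\<exists>j'. (case f i of None \<Rightarrow> Bot | Some j \<Rightarrow> Num j) = Num j')" for i
    by (cases "f i") auto
  ultimately show "interp \<Gamma> (PApp (PC f) M)
      = leafP (\<lambda>i. case f i of None \<Rightarrow> Bot | Some j \<Rightarrow> Num j) (interp \<Gamma> M)"
    using app_constant_case[OF br, where k = "length \<Gamma>" and e = m] by (simp add: leafP_def)
next
  fix \<Gamma> M assume "has_type \<Gamma> M Nat"
  then obtain m where "interp \<Gamma> M = (0, m)" by (rule interp_ground)
  then show "interp \<Gamma> (PApp PSuc M) = leafP (\<lambda>i. Num (i + 1)) (interp \<Gamma> M)"
    by (simp add: app_constant_case leafP_def)
next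
  fix \<Gamma> M assume "has_type \<Gamma> M Nat"
  then obtain m where "interp \<Gamma> M = (0, m)" by (rule interp_ground)
  then show "interp \<Gamma> (PApp PPre M)
      = leafP (\<lambda>i. if i = 0 then Num 0 else Num (i - 1)) (interp \<Gamma> M)"
    by (simp add: app_constant_case leafP_def)
next
  fix \<Gamma> M N P d e assume "has_type \<Gamma> M Nat" "interp \<Gamma> N = (0, d)" "interp \<Gamma> P = (0, e)"
  moreover obtain m where "interp \<Gamma> M = (0, m)" using \<open>has_type \<Gamma> M Nat\<close> by (rule interp_ground)
  ultimately show "interp \<Gamma> (PApp (PApp (PApp PIfz M) N) P)
      = leafP (\<lambda>i. if i = 0 then d else e) (interp \<Gamma> M)"
    by (simp add: app_ifz leafP_def)
qed

end
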